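(* Not every small set is small$^\star$; that is, $\mathcal S^\star\subsetneq\mathcal S$: there exists a small set $X\subseteq 2^\omega$ which is not small$^\star$.
   Context: A set $X\subseteq 2^\omega$ is small ($X\in\mathcal S$) if there is a sequence $\{(I_n,J_n):n\in\omega\}$ such that each $I_n$ is a finite subset of $\omega$, $I_n\cap I_m=\emptyset$ for $n\neq m$, $J_n\subseteq 2^{I_n}$ (functions from $I_n$ to $\{0,1\}$), $\sum_{n\in\omega}\frac{|J_n|}{2^{|I_n|}}<\infty$, and $X\subseteq\{x\in 2^\omega: \text{for infinitely many } n,\ x\restriction I_n\in J_n\}$. A set $X$ is small$^\star$ ($X\in\mathcal S^\star$) if it is small witnessed by such a sequence in which additionally the $I_n$ are consecutive intervals, i.e. there is a strictly increasing sequence of integers $\{k_n:n\in\omega\}$ with $I_n=[k_n,k_{n+1})$ for every $n$. *)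

theory Defs
  imports "HOL-Analysis.Analysis" "HOL-Library.FuncSet"
begin

text \<open>A function from a finite
  set I to {0,1} is represented as an extensional function in I ->E UNIV
  (value undefined outside I); the restriction of x to I is restrict x I.\<close>

definition small_witness :: "(nat \<Rightarrow> nat set) \<Rightarrow> (nat \<Rightarrow> (nat \<Rightarrow> bool) set) \<Rightarrow> bool" where
  "small_witness I J \<longleftrightarrow>
     (\<forall>n. finite (I n)) \<and>
     (\<forall>n m. n \<noteq> m \<longrightarrow> I n \<inter> I m = {}) \<and>
     (\<forall>n. J n \<subseteq> (I n \<rightarrow>\<^sub>E (UNIV :: bool set))) \<and>
     summable (\<lambda>n. real (card (J n)) / 2 ^ card (I n))"

definition covered_by :: "(nat \<Rightarrow> nat set) \<Rightarrow> (nat \<Rightarrow> (nat \<Rightarrow> bool) set) \<Rightarrow> (nat \<Rightarrow> bool) set" where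
  "covered_by I J = {x. \<exists>\<^sub>\<infinity>n. restrict x (I n) \<in> J n}"

definition small :: "(nat \<Rightarrow> bool) set \<Rightarrow> bool" where
  "small X \<longleftrightarrow> (\<exists>I J. small_witness I J \<and> X \<subseteq> covered_by I J)"

definition small_star :: "(nat \<Rightarrow> bool) set \<Rightarrow> bool" where
  "small_star X \<longleftrightarrow> (\<exists>k :: nat \<Rightarrow> nat. \<exists>J. strict_mono k \<and>
      small_witness (\<lambda>n. {k n..<k (Suc n)}) J \<and>
      X \<subseteq> covered_by (\<lambda>n. {k n..<k (Suc n)}) J)"

end

theory Submission
  imports Defs
begin

text \<open>Block n of the witness consists of points a(n,i) = twin_left n i (even, in
  [2^(n+1), 2^(n+2))) and b(n,i) = twin_right n i (odd, in [2^(n+3), 2^(n+4))) for i < n,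
  and J(n) demands x(a(n,i)) = x(b(n,i)); its measure is 2^-n, so the covered set X is
  small. Now take consecutive intervals [k(m), k(m+1)) with sets K(m) of summable measure.
  Beyond every c, some cut k(j) falls into the gap [2^(n+2), 2^(n+3)) of a block n \<ge> c and
  separates its a's from its b's. Once the tail sums are below 1/2, more than half of the
  functions on [k(c), k(j)) avoid every K(m) there, and likewise on [k(j), k(d)). Projected
  to the a's and to the b's, these are two sets of density above 1/2, so they share a
  pattern: some function on [k(c), k(d)) lies in J(n) and avoids all these K(m). Gluing
  such windows one after another yields a point of X that escapes K(m) for all large m.\<close>

section \<open>Counting Boolean functions on finite sets\<close>

lemma card_PiE_bool [simp]: "finite V \<Longrightarrow> card (V \<rightarrow>\<^sub>E (UNIV :: bool set)) = 2 ^ card V"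
  by (simp add: card_PiE)

lemma card_PiE_restrict_vimage:
  fixes S :: "('a \<Rightarrow> bool) set"
  assumes V: "finite V" and PV: "P \<subseteq> V" and S: "S \<subseteq> P \<rightarrow>\<^sub>E UNIV"
  shows "card {z \<in> V \<rightarrow>\<^sub>E UNIV. restrict z P \<in> S} = card S * 2 ^ card (V - P)"
proof -
  let ?split = "\<lambda>z. (restrict z P, restrict z (V - P))"
  have V_eq: "P \<union> (V - P) = V"
    using PV by blast
  have "bij_betw ?split {z \<in> V \<rightarrow>\<^sub>E UNIV. restrict z P \<in> S} (S \<times> (V - P \<rightarrow>\<^sub>E UNIV))"
  proof (rule bij_betw_byWitness[where f' = "merge P (V - P)"])
    show "\<forall>z\<in>{z \<in> V \<rightarrow>\<^sub>E UNIV. restrict z P \<in> S}. merge P (V - P) (?split z) = z"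
      using V_eq by auto
    show "\<forall>st\<in>S \<times> (V - P \<rightarrow>\<^sub>E UNIV). ?split (merge P (V - P) st) = st"
      using S by auto
    show "?split ` {z \<in> V \<rightarrow>\<^sub>E UNIV. restrict z P \<in> S} \<subseteq> S \<times> (V - P \<rightarrow>\<^sub>E UNIV)"
      by auto
    show "merge P (V - P) ` (S \<times> (V - P \<rightarrow>\<^sub>E UNIV)) \<subseteq> {z \<in> V \<rightarrow>\<^sub>E UNIV. restrict z P \<in> S}"
      using S V_eq PiE_cancel_merge[of P "V - P"] by force
  qed
  then show ?thesis
    using V by (simp add: bij_betw_same_card card_cartesian_product)
qed

lemma density_restrict_vimage:
  fixes S :: "('a \<Rightarrow> bool) set"
  assumes V: "finite V" and PV: "P \<subseteq> V" and S: "S \<subseteq> P \<rightarrow>\<^sub>E UNIV"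
  shows "real (card {z \<in> V \<rightarrow>\<^sub>E UNIV. restrict z P \<in> S}) / 2 ^ card V = real (card S) / 2 ^ card P"
proof -
  have "card V = card (V - P) + card P"
    using V PV by (simp add: card_Diff_subset finite_subset card_mono)
  then have "(2::real) ^ card V = 2 ^ card (V - P) * 2 ^ card P"
    by (metis power_add)
  then show ?thesis
    unfolding card_PiE_restrict_vimage[OF assms] by simp
qed

lemma card_PiE_avoiding_gt_half:
  fixes K :: "'b \<Rightarrow> ('a \<Rightarrow> bool) set"
  assumes W: "finite W" and Ms: "finite Ms"
    and P: "\<And>m. m \<in> Ms \<Longrightarrow> P m \<subseteq> W" and K: "\<And>m. m \<in> Ms \<Longrightarrow> K m \<subseteq> P m \<rightarrow>\<^sub>E UNIV"
    and small: "(\<Sum>m\<in>Ms. real (card (K m)) / 2 ^ card (P m)) < 1/2"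
  shows "2 ^ card W < 2 * real (card {z \<in> W \<rightarrow>\<^sub>E UNIV. \<forall>m\<in>Ms. restrict z (P m) \<notin> K m})"
proof -
  define Bad where "Bad = (\<Union>m\<in>Ms. {z \<in> W \<rightarrow>\<^sub>E UNIV. restrict z (P m) \<in> K m})"
  have "card Bad \<le> (\<Sum>m\<in>Ms. card {z \<in> W \<rightarrow>\<^sub>E UNIV. restrict z (P m) \<in> K m})"
    unfolding Bad_def by (rule card_UN_le[OF Ms])
  then have "real (card Bad) \<le> (\<Sum>m\<in>Ms. real (card {z \<in> W \<rightarrow>\<^sub>E UNIV. restrict z (P m) \<in> K m}))"
    by (simp del: of_nat_sum add: of_nat_sum[symmetric])
  also have "\<dots> = 2 ^ card W * (\<Sum>m\<in>Ms. real (card (K m)) / 2 ^ card (P m))"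
    unfolding sum_distrib_left
    by (intro sum.cong refl) (simp add: density_restrict_vimage[OF W P K, symmetric])
  also have "\<dots> < 2 ^ card W * (1/2)"
    using small by (intro mult_strict_left_mono) auto
  finally have Bad_small: "2 * real (card Bad) < 2 ^ card W"
    by simp
  have fin: "finite (W \<rightarrow>\<^sub>E (UNIV :: bool set))"
    using W by (simp add: finite_PiE)
  have Bad_sub: "Bad \<subseteq> W \<rightarrow>\<^sub>E UNIV"
    unfolding Bad_def by auto
  have "card Bad \<le> 2 ^ card W"
    using card_mono[OF fin Bad_sub] W by simp
  moreover have "card ((W \<rightarrow>\<^sub>E UNIV) - Bad) = 2 ^ card W - card Bad"
    using card_Diff_subset[OF finite_subset[OF Bad_sub fin] Bad_sub] W by simp
  moreover have "{z \<in> W \<rightarrow>\<^sub>E UNIV. \<forall>m\<in>Ms. restrict z (P m) \<notin> K m} = (W \<rightarrow>\<^sub>E UNIV) - Bad"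
    unfolding Bad_def by auto
  ultimately show ?thesis
    using Bad_small by (simp add: of_nat_diff)
qed

lemma density_le_density_restrict_image:
  fixes S :: "('a \<Rightarrow> bool) set"
  assumes W: "finite W" and AW: "A \<subseteq> W" and S: "S \<subseteq> W \<rightarrow>\<^sub>E UNIV"
  shows "real (card S) / 2 ^ card W \<le> real (card ((\<lambda>z. restrict z A) ` S)) / 2 ^ card A"
proof -
  have "card S \<le> card {z \<in> W \<rightarrow>\<^sub>E UNIV. restrict z A \<in> (\<lambda>z. restrict z A) ` S}"
    using S W by (intro card_mono) (auto simp: finite_PiE)
  then have "real (card S) / 2 ^ card W
      \<le> real (card {z \<in> W \<rightarrow>\<^sub>E UNIV. restrict z A \<in> (\<lambda>z. restrict z A) ` S}) / 2 ^ card W"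
    by (simp add: divide_right_mono)
  also have "\<dots> = real (card ((\<lambda>z. restrict z A) ` S)) / 2 ^ card A"
    by (rule density_restrict_vimage[OF W AW]) auto
  finally show ?thesis .
qed

lemma reindexed_image_gt_half:
  fixes G :: "('a \<Rightarrow> bool) set" and f :: "'b \<Rightarrow> 'a"
  assumes W: "finite W" and f: "inj_on f D" "f ` D \<subseteq> W"
    and G: "G \<subseteq> W \<rightarrow>\<^sub>E UNIV" and big: "2 ^ card W < 2 * real (card G)"
  shows "2 ^ card D < 2 * real (card ((\<lambda>u. \<lambda>i\<in>D. u (f i)) ` G))"
proof -
  let ?A = "f ` D"
  let ?T = "\<lambda>u. \<lambda>i\<in>D. u (f i)"
  have "inj_on ?T (?A \<rightarrow>\<^sub>E UNIV)"
  proof (rule inj_onI, rule PiE_ext)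
    fix u v a
    assume eq: "?T u = ?T v" and "a \<in> ?A"
    then obtain i where "i \<in> D" "a = f i"
      by blast
    with fun_cong[OF eq, of i] show "u a = v a"
      by simp
  qed auto
  then have "inj_on ?T ((\<lambda>u. restrict u ?A) ` G)"
    by (rule inj_on_subset) auto
  moreover have "?T ` G = ?T ` (\<lambda>u. restrict u ?A) ` G"
    unfolding image_image by (intro image_cong refl restrict_ext) auto
  ultimately have card_T: "card (?T ` G) = card ((\<lambda>u. restrict u ?A) ` G)"
    by (simp add: card_image)
  have "1/2 < real (card G) / 2 ^ card W"
    using big by (simp add: field_simps)
  also have "\<dots> \<le> real (card ((\<lambda>u. restrict u ?A) ` G)) / 2 ^ card ?A"
    by (rule density_le_density_restrict_image[OF W f(2) G])
  also have "\<dots> = real (card (?T ` G)) / 2 ^ card D"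
    using f card_T by (simp add: card_image)
  finally show ?thesis
    by (simp add: field_simps)
qed

lemma Int_nonempty_if_card_gt:
  assumes U: "finite U" and "S \<subseteq> U" "T \<subseteq> U" and gt: "card U < card S + card T"
  shows "S \<inter> T \<noteq> {}"
proof
  assume "S \<inter> T = {}"
  then have "card S + card T = card (S \<union> T)"
    using assms by (simp add: card_Un_disjoint finite_subset)
  also have "\<dots> \<le> card U"
    using assms by (intro card_mono) auto
  finally show False
    using gt by simp
qed

lemma exists_agreeing_pair:
  fixes f g :: "'b \<Rightarrow> 'a" and G1 G2 :: "('a \<Rightarrow> bool) set"
  assumes W1: "finite W1" "inj_on f D" "f ` D \<subseteq> W1" "G1 \<subseteq> W1 \<rightarrow>\<^sub>E UNIV"
      "2 ^ card W1 < 2 * real (card G1)"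
    and W2: "finite W2" "inj_on g D" "g ` D \<subseteq> W2" "G2 \<subseteq> W2 \<rightarrow>\<^sub>E UNIV"
      "2 ^ card W2 < 2 * real (card G2)"
  shows "\<exists>z1\<in>G1. \<exists>z2\<in>G2. \<forall>i\<in>D. z1 (f i) = z2 (g i)"
proof -
  let ?T1 = "(\<lambda>u. \<lambda>i\<in>D. u (f i)) ` G1"
  let ?T2 = "(\<lambda>u. \<lambda>i\<in>D. u (g i)) ` G2"
  have "finite D"
    using W1 by (meson finite_imageD finite_subset)
  then have fin: "finite (D \<rightarrow>\<^sub>E (UNIV :: bool set))"
    by (simp add: finite_PiE)
  have "real (2 ^ card D) < real (card ?T1 + card ?T2)"
    using reindexed_image_gt_half[OF W1] reindexed_image_gt_half[OF W2] by simp
  then have "card (D \<rightarrow>\<^sub>E (UNIV :: bool set)) < card ?T1 + card ?T2"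
    using \<open>finite D\<close> by (simp only: of_nat_less_iff card_PiE_bool)
  then have "?T1 \<inter> ?T2 \<noteq> {}"
    by (intro Int_nonempty_if_card_gt[OF fin]) auto
  then obtain z1 z2 where z: "z1 \<in> G1" "z2 \<in> G2" and eq: "(\<lambda>i\<in>D. z1 (f i)) = (\<lambda>i\<in>D. z2 (g i))"
    by blast
  have "z1 (f i) = z2 (g i)" if "i \<in> D" for i
    using fun_cong[OF eq, of i] that by simp
  with z show ?thesis
    by blast
qed

section \<open>Windows of an interval partition\<close>

lemma interval_block_subset:
  assumes "strict_mono (k :: nat \<Rightarrow> nat)" "c \<le> m" "m < j"
  shows "{k m..<k (Suc m)} \<subseteq> {k c..<k j}"
proof -
  have "k c \<le> k m" "k (Suc m) \<le> k j"
    using assms by (simp_all add: strict_mono_less_eq)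
  then show ?thesis
    by auto
qed

lemma exists_avoiding_agreeing:
  fixes k :: "nat \<Rightarrow> nat" and K :: "nat \<Rightarrow> (nat \<Rightarrow> bool) set" and f g :: "'b \<Rightarrow> nat"
  assumes k: "strict_mono k" and K: "\<And>m. K m \<subseteq> {k m..<k (Suc m)} \<rightarrow>\<^sub>E UNIV"
    and small_left: "(\<Sum>m\<in>{c..<j}. real (card (K m)) / 2 ^ card {k m..<k (Suc m)}) < 1/2"
    and small_right: "(\<Sum>m\<in>{j..<d}. real (card (K m)) / 2 ^ card {k m..<k (Suc m)}) < 1/2"
    and f: "inj_on f D" "f ` D \<subseteq> {k c..<k j}"
    and g: "inj_on g D" "g ` D \<subseteq> {k j..<k d}"
  shows "\<exists>z. (\<forall>m\<in>{c..<d}. restrict z {k m..<k (Suc m)} \<notin> K m) \<and> (\<forall>i\<in>D. z (f i) = z (g i))"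
proof -
  define avoiding where "avoiding a b =
      {z \<in> {k a..<k b} \<rightarrow>\<^sub>E UNIV. \<forall>m\<in>{a..<b}. restrict z {k m..<k (Suc m)} \<notin> K m}" for a b
  have blocks: "{k m..<k (Suc m)} \<subseteq> {k a..<k b}" if "m \<in> {a..<b}" for a b m
    using interval_block_subset[OF k] that by simp
  have left: "2 ^ card {k c..<k j} < 2 * real (card (avoiding c j))"
    unfolding avoiding_def
    by (rule card_PiE_avoiding_gt_half[OF _ _ blocks K small_left]) simp_all
  have right: "2 ^ card {k j..<k d} < 2 * real (card (avoiding j d))"
    unfolding avoiding_def
    by (rule card_PiE_avoiding_gt_half[OF _ _ blocks K small_right]) simp_all
  have "\<exists>z1\<in>avoiding c j. \<exists>z2\<in>avoiding j d. \<forall>i\<in>D. z1 (f i) = z2 (g i)"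
    by (rule exists_agreeing_pair[OF _ f _ left _ g _ right]) (auto simp: avoiding_def)
  then obtain z1 z2 where z1: "z1 \<in> avoiding c j" and z2: "z2 \<in> avoiding j d"
    and agree: "\<forall>i\<in>D. z1 (f i) = z2 (g i)"
    by blast
  define z where "z i = (if i < k j then z1 i else z2 i)" for i
  have "restrict z {k m..<k (Suc m)} \<notin> K m" if m: "m \<in> {c..<d}" for m
  proof (cases "m < j")
    case True
    then have "restrict z {k m..<k (Suc m)} = restrict z1 {k m..<k (Suc m)}"
      using interval_block_subset[OF k, of m m j] by (intro restrict_ext) (auto simp: z_def)
    with z1 m True show ?thesis
      unfolding avoiding_def by auto
  next
    case False
    then have "restrict z {k m..<k (Suc m)} = restrict z2 {k m..<k (Suc m)}"
      using strict_mono_less_eq[OF k, of j m] by (intro restrict_ext) (auto simp: z_def)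
    with z2 m False show ?thesis
      unfolding avoiding_def by auto
  qed
  moreover have "z (f i) = z (g i)" if "i \<in> D" for i
    using agree f(2) g(2) that by (auto simp: z_def)
  ultimately show ?thesis
    by blast
qed

definition good_window :: "(nat \<Rightarrow> nat set) \<Rightarrow> (nat \<Rightarrow> (nat \<Rightarrow> bool) set) \<Rightarrow> (nat \<Rightarrow> nat) \<Rightarrow>
    (nat \<Rightarrow> (nat \<Rightarrow> bool) set) \<Rightarrow> nat \<Rightarrow> nat \<Rightarrow> bool"
  where "good_window I J k K c d \<longleftrightarrow> (\<exists>n\<ge>c. \<exists>z. I n \<subseteq> {k c..<k d} \<and> restrict z (I n) \<in> J n \<and>
      (\<forall>m\<in>{c..<d}. restrict z {k m..<k (Suc m)} \<notin> K m))"

lemma Least_bracket_eq: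
  assumes s: "strict_mono (s :: nat \<Rightarrow> nat)" and "s h \<le> i" "i < s (Suc h)"
  shows "(LEAST h. i < s (Suc h)) = h"
proof (rule Least_equality)
  show "i < s (Suc h)"
    by fact
next
  fix h'
  assume "i < s (Suc h')"
  then show "h \<le> h'"
    using \<open>s h \<le> i\<close> strict_mono_less_eq[OF s, of "Suc h'" h] by linarith
qed

lemma strict_mono_bracket:
  assumes s: "strict_mono (s :: nat \<Rightarrow> nat)" and "s 0 \<le> i"
  obtains h where "s h \<le> i" "i < s (Suc h)"
proof -
  let ?h = "LEAST h. i < s (Suc h)"
  have "i < s (Suc i)"
    using seq_suble[OF s, of "Suc i"] by simp
  then have "i < s (Suc ?h)"
    by (rule LeastI)
  moreover have "s ?h \<le> i"
  proof (cases ?h)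
    case 0
    then show ?thesis
      using \<open>s 0 \<le> i\<close> by simp
  next
    case (Suc h')
    then have "\<not> i < s (Suc h')"
      using not_less_Least[of h' "\<lambda>h. i < s (Suc h)"] by simp
    then show ?thesis
      using Suc by simp
  qed
  ultimately show thesis
    using that by blast
qed

lemma glue_along_strict_mono:
  fixes s :: "nat \<Rightarrow> nat" and z :: "nat \<Rightarrow> nat \<Rightarrow> 'a"
  assumes "strict_mono s"
  obtains x where "\<And>h i. s h \<le> i \<Longrightarrow> i < s (Suc h) \<Longrightarrow> x i = z h i"
  by (rule that[of "\<lambda>i. z (LEAST h. i < s (Suc h)) i"]) (simp add: Least_bracket_eq[OF assms])

lemma good_window_chain:
  assumes good: "\<And>c. M \<le> c \<Longrightarrow> \<exists>d>c. good_window I J k K c d"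
  obtains s where "strict_mono s" "s 0 = M" "\<And>h. good_window I J k K (s h) (s (Suc h))"
proof -
  obtain nxt where nxt: "\<And>c. M \<le> c \<Longrightarrow> c < nxt c \<and> good_window I J k K c (nxt c)"
    using good by metis
  define s where "s h = (nxt ^^ h) M" for h
  have s_Suc: "s (Suc h) = nxt (s h)" for h
    by (simp add: s_def)
  have s_ge: "M \<le> s h" for h
  proof (induction h)
    case 0
    then show ?case
      by (simp add: s_def)
  next
    case (Suc h)
    then show ?case
      using nxt[OF Suc] by (simp add: s_Suc)
  qed
  show thesis
  proof (rule that)
    show "strict_mono s"
      unfolding strict_mono_Suc_iff using nxt[OF s_ge] by (simp add: s_Suc)
    show "s 0 = M"
      by (simp add: s_def)
    show "good_window I J k K (s h) (s (Suc h))" for h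
      using nxt[OF s_ge] by (simp add: s_Suc)
  qed
qed

lemma exists_covered_not_covered:
  fixes I :: "nat \<Rightarrow> nat set" and J K :: "nat \<Rightarrow> (nat \<Rightarrow> bool) set" and k :: "nat \<Rightarrow> nat"
  assumes k: "strict_mono k"
    and good: "\<And>c. M \<le> c \<Longrightarrow> \<exists>d>c. good_window I J k K c d"
  obtains x where "x \<in> covered_by I J" "x \<notin> covered_by (\<lambda>m. {k m..<k (Suc m)}) K"
proof -
  obtain s where s: "strict_mono s" "s 0 = M" and win: "\<And>h. good_window I J k K (s h) (s (Suc h))"
    using good_window_chain[OF good] by blast
  obtain blk pt where blk: "\<And>h. s h \<le> blk h" "\<And>h. I (blk h) \<subseteq> {k (s h)..<k (s (Suc h))}"
    and pt: "\<And>h. restrict (pt h) (I (blk h)) \<in> J (blk h)"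
    and avoid: "\<And>h. \<forall>m\<in>{s h..<s (Suc h)}. restrict (pt h) {k m..<k (Suc m)} \<notin> K m"
    using win unfolding good_window_def by metis
  have "strict_mono (\<lambda>h. k (s h))"
    using k s(1) by (simp add: strict_mono_def)
  then obtain x where x: "\<And>h i. k (s h) \<le> i \<Longrightarrow> i < k (s (Suc h)) \<Longrightarrow> x i = pt h i"
    using glue_along_strict_mono[where z = pt] by blast
  have "\<exists>n>N. restrict x (I n) \<in> J n" for N
  proof -
    have "N < blk (Suc N)"
      using seq_suble[OF s(1), of "Suc N"] blk(1)[of "Suc N"] by simp
    moreover have "restrict x (I (blk (Suc N))) = restrict (pt (Suc N)) (I (blk (Suc N)))"
      using blk(2)[of "Suc N"] by (intro restrict_ext x) auto
    ultimately show ?thesis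
      using pt[of "Suc N"] by auto
  qed
  then have "x \<in> covered_by I J"
    unfolding covered_by_def INFM_nat by blast
  moreover have "x \<notin> covered_by (\<lambda>m. {k m..<k (Suc m)}) K"
  proof
    assume "x \<in> covered_by (\<lambda>m. {k m..<k (Suc m)}) K"
    then obtain m where "M \<le> m" and m: "restrict x {k m..<k (Suc m)} \<in> K m"
      unfolding covered_by_def INFM_nat_le by blast
    then obtain h where h: "s h \<le> m" "m < s (Suc h)"
      using strict_mono_bracket[OF s(1)] s(2) by metis
    have "{k m..<k (Suc m)} \<subseteq> {k (s h)..<k (s (Suc h))}"
      by (rule interval_block_subset[OF k h])
    then have "restrict x {k m..<k (Suc m)} = restrict (pt h) {k m..<k (Suc m)}"
      by (intro restrict_ext x) auto
    with m h avoid[of h] show False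
      by auto
  qed
  ultimately show thesis
    using that by blast
qed

section \<open>The twin blocks\<close>

definition twin_left :: "nat \<Rightarrow> nat \<Rightarrow> nat" where
  "twin_left n i = 2 * (2 ^ n + i)"

definition twin_right :: "nat \<Rightarrow> nat \<Rightarrow> nat" where
  "twin_right n i = 2 * (4 * 2 ^ n + i) + 1"

definition twin_block :: "nat \<Rightarrow> nat set" where
  "twin_block n = twin_left n ` {..<n} \<union> twin_right n ` {..<n}"

definition twin_patterns :: "nat \<Rightarrow> (nat \<Rightarrow> bool) set" where
  "twin_patterns n = {y \<in> twin_block n \<rightarrow>\<^sub>E UNIV. \<forall>i<n. y (twin_left n i) = y (twin_right n i)}"

lemma twin_left_bounds:
  assumes "i < n"
  shows "2 ^ (n + 1) \<le> twin_left n i" "twin_left n i < 2 ^ (n + 2)"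
proof -
  have "i < 2 ^ n"
    using assms less_exp[of n] by linarith
  then show "2 ^ (n + 1) \<le> twin_left n i" "twin_left n i < 2 ^ (n + 2)"
    unfolding twin_left_def by (simp_all add: power_add)
qed

lemma twin_right_bounds:
  assumes "i < n"
  shows "2 ^ (n + 3) \<le> twin_right n i" "twin_right n i < 2 ^ (n + 4)"
proof -
  have "i < 2 ^ n"
    using assms less_exp[of n] by linarith
  then show "2 ^ (n + 3) \<le> twin_right n i" "twin_right n i < 2 ^ (n + 4)"
    unfolding twin_right_def by (simp_all add: power_add)
qed

lemma floor_log_twin_left: "i < n \<Longrightarrow> floor_log (twin_left n i) = n + 1"
  using twin_left_bounds[of i n] by (intro floor_log_eqI) (simp_all add: power_add)

lemma floor_log_twin_right: "i < n \<Longrightarrow> floor_log (twin_right n i) = n + 3"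
  using twin_right_bounds[of i n] by (intro floor_log_eqI) (simp_all add: power_add)

lemma even_twin_left: "even (twin_left n i)"
  by (simp add: twin_left_def)

lemma odd_twin_right: "odd (twin_right n i)"
  by (simp add: twin_right_def)

lemma inj_on_twin_left: "inj_on (twin_left n) D"
  by (rule inj_onI) (simp add: twin_left_def)

lemma inj_on_twin_right: "inj_on (twin_right n) D"
  by (rule inj_onI) (simp add: twin_right_def)

lemma twin_block_memD:
  assumes "p \<in> twin_block n"
  shows "even p \<and> floor_log p = n + 1 \<or> odd p \<and> floor_log p = n + 3"
proof -
  from assms consider i where "i < n" "p = twin_left n i" | i where "i < n" "p = twin_right n i"
    unfolding twin_block_def by blast
  then show ?thesis
    by cases (simp_all add: even_twin_left odd_twin_right floor_log_twin_left floor_log_twin_right)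
qed

lemma disjoint_twin_block:
  assumes "n \<noteq> m"
  shows "twin_block n \<inter> twin_block m = {}"
proof (rule equals0I)
  fix p
  assume "p \<in> twin_block n \<inter> twin_block m"
  then show False
    using twin_block_memD[of p n] twin_block_memD[of p m] assms by auto
qed

lemma card_twin_block: "card (twin_block n) = 2 * n"
proof -
  have "twin_left n ` {..<n} \<inter> twin_right n ` {..<n} = {}"
    using even_twin_left odd_twin_right by (metis disjoint_iff imageE)
  then show ?thesis
    unfolding twin_block_def
    by (simp add: card_Un_disjoint card_image inj_on_twin_left inj_on_twin_right)
qed

lemma card_twin_patterns_le: "card (twin_patterns n) \<le> 2 ^ n"
proof -
  let ?L = "twin_left n ` {..<n}"
  have "inj_on (\<lambda>y. restrict y ?L) (twin_patterns n)"
  proof (rule inj_onI)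
    fix y y'
    assume y: "y \<in> twin_patterns n" and y': "y' \<in> twin_patterns n"
      and eq: "restrict y ?L = restrict y' ?L"
    have on_left: "y (twin_left n i) = y' (twin_left n i)" if "i < n" for i
      using fun_cong[OF eq, of "twin_left n i"] that by simp
    have "y p = y' p" if "p \<in> twin_block n" for p
    proof -
      from that consider i where "i < n" "p = twin_left n i" | i where "i < n" "p = twin_right n i"
        unfolding twin_block_def by blast
      then show ?thesis
      proof cases
        case 1
        then show ?thesis using on_left by simp
      next
        case (2 i)
        then have "y p = y (twin_left n i)" "y' p = y' (twin_left n i)"
          using y y' unfolding twin_patterns_def by auto
        then show ?thesis using on_left \<open>i < n\<close> by simp
      qed
    qed
    then show "y = y'"
      using y y' unfolding twin_patterns_def by (blast intro: PiE_ext)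
  qed
  then have "card (twin_patterns n) = card ((\<lambda>y. restrict y ?L) ` twin_patterns n)"
    by (simp add: card_image)
  also have "\<dots> \<le> card (?L \<rightarrow>\<^sub>E (UNIV :: bool set))"
    by (intro card_mono) (auto simp: finite_PiE)
  also have "\<dots> = 2 ^ n"
    by (simp add: card_image inj_on_twin_left)
  finally show ?thesis .
qed

lemma small_witness_twin: "small_witness twin_block twin_patterns"
  unfolding small_witness_def
proof (intro conjI allI impI)
  show "summable (\<lambda>n. real (card (twin_patterns n)) / 2 ^ card (twin_block n))"
  proof (rule summable_comparison_test)
    show "summable (\<lambda>n. (1/2 :: real) ^ n)"
      by simp
    have "real (card (twin_patterns n)) / 2 ^ card (twin_block n) \<le> (1/2) ^ n" for n
    proof -
      have "real (card (twin_patterns n)) / 2 ^ card (twin_block n) \<le> 2 ^ n / 2 ^ (2 * n)"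
        unfolding card_twin_block
        using card_twin_patterns_le[of n] by (intro divide_right_mono) (simp_all flip: of_nat_le_iff)
      also have "\<dots> = (1/2) ^ n"
        by (simp add: mult_2 power_add power_one_over)
      finally show ?thesis .
    qed
    then show "\<exists>N. \<forall>n\<ge>N. norm (real (card (twin_patterns n)) / 2 ^ card (twin_block n)) \<le> (1/2) ^ n"
      by simp
  qed
next
  fix n
  show "finite (twin_block n)"
    by (simp add: twin_block_def)
  show "twin_patterns n \<subseteq> twin_block n \<rightarrow>\<^sub>E UNIV"
    by (auto simp: twin_patterns_def)
next
  fix n m :: nat
  assume "n \<noteq> m"
  then show "twin_block n \<inter> twin_block m = {}"
    by (rule disjoint_twin_block)
qed

lemma restrict_in_twin_patterns_iff:
  "restrict z (twin_block n) \<in> twin_patterns n \<longleftrightarrow> (\<forall>i<n. z (twin_left n i) = z (twin_right n i))"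
  unfolding twin_patterns_def twin_block_def by auto

lemma twin_block_between:
  assumes k: "strict_mono (k :: nat \<Rightarrow> nat)"
  obtains j d n where "c < j" "j < d" "c \<le> n"
    "twin_left n ` {..<n} \<subseteq> {k c..<k j}" "twin_right n ` {..<n} \<subseteq> {k j..<k d}"
proof -
  define j where "j = 4 * k c + 2 ^ (c + 2) + c + 1"
  define e where "e = floor_log (k j)"
  have kj: "4 * k c + 2 ^ (c + 2) < k j"
    using seq_suble[OF k, of j] unfolding j_def by linarith
  then have e: "2 ^ e \<le> k j" "k j < 2 * 2 ^ e"
    unfolding e_def using floor_log_exp2_le floor_log_exp2_gt by simp_all
  have "floor_log (2 ^ (c + 2)) \<le> e"
    unfolding e_def using kj by (intro floor_log_le_iff) simp
  then have "c + 2 \<le> e"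
    by (simp only: floor_log_power)
  define n where "n = e - 2"
  have e_eq: "e = n + 2"
    using \<open>c + 2 \<le> e\<close> unfolding n_def by simp
  define d where "d = 2 ^ (n + 4) + j + 1"
  have kd: "d \<le> k d"
    by (rule seq_suble[OF k])
  show thesis
  proof (rule that)
    show "c < j" "j < d"
      unfolding j_def d_def by simp_all
    show "c \<le> n"
      using \<open>c + 2 \<le> e\<close> unfolding n_def by simp
    have "k c < 2 ^ (n + 1)" "2 ^ (n + 2) \<le> k j" "k j < 2 ^ (n + 3)" "2 ^ (n + 4) \<le> k d"
      using kj e e_eq kd unfolding d_def by (simp_all add: power_add)
    then show "twin_left n ` {..<n} \<subseteq> {k c..<k j}" "twin_right n ` {..<n} \<subseteq> {k j..<k d}"
      using twin_left_bounds twin_right_bounds by (force intro!: image_subsetI)+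
  qed
qed

lemma twin_good_windows:
  fixes k :: "nat \<Rightarrow> nat" and K :: "nat \<Rightarrow> (nat \<Rightarrow> bool) set"
  assumes k: "strict_mono k" and K: "small_witness (\<lambda>m. {k m..<k (Suc m)}) K"
  obtains M where "\<And>c. M \<le> c \<Longrightarrow> \<exists>d>c. good_window twin_block twin_patterns k K c d"
proof -
  let ?\<mu> = "\<lambda>m. real (card (K m)) / 2 ^ card {k m..<k (Suc m)}"
  have K_sub: "\<And>m. K m \<subseteq> {k m..<k (Suc m)} \<rightarrow>\<^sub>E UNIV" and "summable ?\<mu>"
    using K unfolding small_witness_def by auto
  then obtain M where M: "\<And>a b. M \<le> a \<Longrightarrow> norm (sum ?\<mu> {a..<b}) < 1/2"
    unfolding summable_Cauchy by (meson half_gt_zero zero_less_one)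
  have tail: "sum ?\<mu> {a..<b} < 1/2" if "M \<le> a" for a b
    using M[OF that, of b] by simp
  show thesis
  proof (rule that)
    fix c
    assume "M \<le> c"
    obtain j d n where "c < j" "j < d" "c \<le> n"
      and left: "twin_left n ` {..<n} \<subseteq> {k c..<k j}" and right: "twin_right n ` {..<n} \<subseteq> {k j..<k d}"
      using twin_block_between[OF k] .
    then obtain z where avoid: "\<forall>m\<in>{c..<d}. restrict z {k m..<k (Suc m)} \<notin> K m"
      and agree: "\<forall>i\<in>{..<n}. z (twin_left n i) = z (twin_right n i)"
      using exists_avoiding_agreeing[OF k K_sub tail tail inj_on_twin_left left inj_on_twin_right right]
        \<open>M \<le> c\<close> by auto
    have "twin_block n \<subseteq> {k c..<k d}"
      using left right \<open>c < j\<close> \<open>j < d\<close> strict_monoD[OF k]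
      unfolding twin_block_def by fastforce
    with \<open>c \<le> n\<close> avoid agree have "good_window twin_block twin_patterns k K c d"
      unfolding good_window_def
      by (intro exI[of _ n] exI[of _ z] conjI) (auto simp: restrict_in_twin_patterns_iff)
    with \<open>c < j\<close> \<open>j < d\<close> show "\<exists>d>c. good_window twin_block twin_patterns k K c d"
      by (intro exI[of _ d]) simp
  qed
qed

theorem mainTheorem3:
  shows "\<exists>X :: (nat \<Rightarrow> bool) set. small X \<and> \<not> small_star X"
proof (intro exI conjI)
  show "small (covered_by twin_block twin_patterns)"
    unfolding small_def using small_witness_twin by blast
  show "\<not> small_star (covered_by twin_block twin_patterns)"
  proof
    assume "small_star (covered_by twin_block twin_patterns)"
    then obtain k K where k: "strict_mono k" and K: "small_witness (\<lambda>m. {k m..<k (Suc m)}) K"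
      and cover: "covered_by twin_block twin_patterns \<subseteq> covered_by (\<lambda>m. {k m..<k (Suc m)}) K"
      unfolding small_star_def by blast
    obtain M where "\<And>c. M \<le> c \<Longrightarrow> \<exists>d>c. good_window twin_block twin_patterns k K c d"
      using twin_good_windows[OF k K] by blast
    then obtain x where "x \<in> covered_by twin_block twin_patterns"
      and "x \<notin> covered_by (\<lambda>m. {k m..<k (Suc m)}) K"
      using exists_covered_not_covered[OF k] by blast
    with cover show False
      by blast
  qed
qed

end
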